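(* Let $k\ge3$ and let $\mathcal B_k$ denote $\mathcal E_1$ if $k=3$ and $\mathcal E_{k-2}$ if $k\ge4$ (so $\mathcal B_k$ carries exactly the nonlocal coordinates $\psi^{(3)},\dots,\psi^{(k-1)}$). Then the horizontal $1$-form $\omega^{(k)}=X^{(k)}\,dx+Y^{(k)}\,dy$ is a nontrivial conservation law of $\mathcal B_k$: it satisfies $\mathcal D_y(X^{(k)})=\mathcal D_x(Y^{(k)})$, where $\mathcal D_x,\mathcal D_y$ are the total derivatives of $\mathcal B_k$, and there is no smooth function $g$ on $\mathcal B_k$ with $X^{(k)}=\mathcal D_x(g)$ and $Y^{(k)}=\mathcal D_y(g)$.
   Context: Let $\mathcal E_1$ be the system $u_y+vu_x=\frac1{v-u}$, $v_y+uv_x=\frac1{u-v}$ with internal coordinates $x,y,u_i=\partial^iu/\partial x^i$, $v_i=\partial^iv/\partial x^i$ ($i\ge0$) and total derivatives $D_x=\partial_x+\sum_i(u_{i+1}\partial_{u_i}+v_{i+1}\partial_{v_i})$, $D_y=\partial_y+\sum_i\big(D_x^i(\tfrac1{v-u}-vu_1)\partial_{u_i}+D_x^i(\tfrac1{u-v}-uv_1)\partial_{v_i}\big)$. Let $\sigma_m=\sum_{i+j=m}u^iv^j$, $\psi^{(1)}=y$, $\psi^{(2)}=x$, and let $\psi^{(k)}$, $k\ge3$, be new coordinates; for $k\ge2$ put $X^{(k)}=\sigma_{k-2}-\sum_{i=1}^{k-3}i\,\sigma_{k-i-3}\psi^{(i)}$ and for $k\ge3$ put $Y^{(k)}=-uv\,X^{(k-1)}-(k-2)\psi^{(k-2)}$.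 For $m\ge2$, $\mathcal E_m=\mathcal E_1\times\mathbb R^{m-1}$ has the additional coordinates $\psi^{(3)},\dots,\psi^{(m+1)}$ and the total derivatives $D^{(m)}_x=D_x+\sum_{i=3}^{m+1}X^{(i)}\partial/\partial\psi^{(i)}$, $D^{(m)}_y=D_y+\sum_{i=3}^{m+1}Y^{(i)}\partial/\partial\psi^{(i)}$. *)

theory Defs
  imports "HOL-Analysis.Analysis"
begin

text \<open>Coordinates psi^(j) not belonging to the covering under consideration are simply
  ignored: functions on the covering are required not to depend on them.\<close>

datatype coord = Cx | Cy | Cu nat | Cv nat | Cpsi nat

type_synonym pt = "coord \<Rightarrow> real"

text \<open>Domain of the equation (the right-hand sides 1/(v-u) require u /= v).\<close>
definition Dom :: "pt set" where
  "Dom = {p. p (Cu 0) \<noteq> p (Cv 0)}"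

definition pd :: "coord \<Rightarrow> (pt \<Rightarrow> real) \<Rightarrow> pt \<Rightarrow> real" where
  "pd c g p = deriv (\<lambda>t. g (p(c := t))) (p c)"

fun iter_pd :: "coord list \<Rightarrow> (pt \<Rightarrow> real) \<Rightarrow> pt \<Rightarrow> real" where
  "iter_pd [] g = g"
| "iter_pd (c # cs) g = pd c (iter_pd cs g)"

definition coordsE :: "nat \<Rightarrow> coord set" where
  "coordsE m = {Cx, Cy} \<union> range Cu \<union> range Cv \<union> Cpsi ` {3..m+1}"

text \<open>Smooth functions on E_m: functions of finitely many of its coordinates, all of whose
  iterated partial derivatives (of every order) exist and are continuous on the domain
  (i.e. C-infinity functions of those finitely many variables).\<close>
definition smoothE :: "nat \<Rightarrow> (pt \<Rightarrow> real) \<Rightarrow> bool" where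
  "smoothE m g \<longleftrightarrow>
     (\<exists>S. finite S \<and> S \<subseteq> coordsE m \<and>
          (\<forall>p q. (\<forall>c\<in>S. p c = q c) \<longrightarrow> g p = g q)) \<and>
     (\<forall>cs. continuous_on Dom (iter_pd cs g) \<and>
           (\<forall>c. \<forall>p\<in>Dom. (\<lambda>t. iter_pd cs g (p(c := t))) differentiable (at (p c))))"

text \<open>Total derivatives of E_1 (the series have only finitely many nonzero terms
  on functions depending on finitely many coordinates).\<close>
definition Dx1 :: "(pt \<Rightarrow> real) \<Rightarrow> pt \<Rightarrow> real" where
  "Dx1 g p = pd Cx g p +
     (\<Sum>i. p (Cu (Suc i)) * pd (Cu i) g p + p (Cv (Suc i)) * pd (Cv i) g p)"

definition rhsU :: "pt \<Rightarrow> real" where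
  "rhsU p = 1 / (p (Cv 0) - p (Cu 0)) - p (Cv 0) * p (Cu 1)"

definition rhsV :: "pt \<Rightarrow> real" where
  "rhsV p = 1 / (p (Cu 0) - p (Cv 0)) - p (Cu 0) * p (Cv 1)"

definition Dy1 :: "(pt \<Rightarrow> real) \<Rightarrow> pt \<Rightarrow> real" where
  "Dy1 g p = pd Cy g p +
     (\<Sum>i. (Dx1 ^^ i) rhsU p * pd (Cu i) g p + (Dx1 ^^ i) rhsV p * pd (Cv i) g p)"

definition sigma :: "nat \<Rightarrow> pt \<Rightarrow> real" where
  "sigma m p = (\<Sum>i\<in>{0..m}. p (Cu 0) ^ i * p (Cv 0) ^ (m - i))"

definition psi :: "nat \<Rightarrow> pt \<Rightarrow> real" where
  "psi i p = (if i = 1 then p Cy else if i = 2 then p Cx else p (Cpsi i))"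

text \<open>X^(k) for k >= 2, Y^(k) for k >= 3.\<close>
definition Xk :: "nat \<Rightarrow> pt \<Rightarrow> real" where
  "Xk k p = sigma (k - 2) p - (\<Sum>i\<in>{1..k-3}. real i * sigma (k - i - 3) p * psi i p)"

definition Yk :: "nat \<Rightarrow> pt \<Rightarrow> real" where
  "Yk k p = - p (Cu 0) * p (Cv 0) * Xk (k - 1) p - real (k - 2) * psi (k - 2) p"

definition DxE :: "nat \<Rightarrow> (pt \<Rightarrow> real) \<Rightarrow> pt \<Rightarrow> real" where
  "DxE m g p = Dx1 g p + (\<Sum>i\<in>{3..m+1}. Xk i p * pd (Cpsi i) g p)"

definition DyE :: "nat \<Rightarrow> (pt \<Rightarrow> real) \<Rightarrow> pt \<Rightarrow> real" where
  "DyE m g p = Dy1 g p + (\<Sum>i\<in>{3..m+1}. Yk i p * pd (Cpsi i) g p)"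

definition Bidx :: "nat \<Rightarrow> nat" where
  "Bidx k = (if k = 3 then 1 else k - 2)"

end

theory Submission
  imports Defs "HOL-Computational_Algebra.Polynomial"
begin

text \<open>With psi^(1) = y and psi^(2) = x, the total derivatives act on functions of
  u, v, psi^(1), ..., psi^(k-1) as the vector fields
  u_1 d_u + v_1 d_v + sum_i X^(i) d_psi^(i) and
  (1/(v-u) - v u_1) d_u + (1/(u-v) - u v_1) d_v + sum_i Y^(i) d_psi^(i),
  where X^(1) = 0, X^(2) = 1, Y^(1) = 1, Y^(2) = 0.  Since sigma_(m+2) = (u+v) sigma_(m+1) - uv sigma_m,
  the X^(j) obey X^(j+3) = (u+v) X^(j+2) - uv X^(j+1) - j psi^(j), and D_y X^(k) = D_x Y^(k)
  follows by a two-step induction along this recurrence, using only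
  D_y (u+v) = - D_x (uv) and D_y (uv) = uv D_x (u+v) - (u+v) D_x (uv) + 1.

  For nontriviality suppose X^(k) = D_x g.  If g does not depend on u_(j+1), then D_x g is
  affine in u_(j+1) with slope d g / d u_j, while X^(k) does not involve u_(j+1); descending
  from the finitely many jet variables of g gives d g / d u = 0.  On the half line u < 0 with
  all other coordinates zero, D_x g is then a polynomial in u of degree below k - 2, whereas
  X^(k) = u^(k-2) there.\<close>

section \<open>The conservation law\<close>

definition psi_coord :: "nat \<Rightarrow> coord" where
  "psi_coord i = (if i = 1 then Cy else if i = 2 then Cx else Cpsi i)"

lemma psi_eq: "psi i p = p (psi_coord i)"
  by (simp add: psi_def psi_coord_def)

lemma psi_coord_inject [simp]: "psi_coord i = psi_coord j \<longleftrightarrow> i = j"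
  by (auto simp: psi_coord_def)

lemma psi_coord_ne_jet [simp]:
  "psi_coord i \<noteq> Cu j" "psi_coord i \<noteq> Cv j" "Cu j \<noteq> psi_coord i" "Cv j \<noteq> psi_coord i"
  by (auto simp: psi_coord_def)

lemma psi_coord_simps [simp]:
  "psi_coord (Suc 0) = Cy" "psi_coord 2 = Cx" "psi_coord (Suc (Suc 0)) = Cx"
  "3 \<le> i \<Longrightarrow> psi_coord i = Cpsi i"
  by (auto simp: psi_coord_def)

lemma sigma_0 [simp]: "sigma 0 p = 1"
  by (simp add: sigma_def)

lemma sigma_Suc: "sigma (Suc n) p = p (Cu 0) * sigma n p + p (Cv 0) ^ Suc n"
proof -
  have "sigma (Suc n) p = (\<Sum>i\<in>{0..n}. p (Cu 0) ^ Suc i * p (Cv 0) ^ (Suc n - Suc i)) + p (Cv 0) ^ Suc n"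
    unfolding sigma_def by (subst sum.atLeast0_atMost_Suc_shift) simp
  then show ?thesis
    by (simp add: sigma_def sum_distrib_left mult.assoc)
qed

lemma sigma_Suc_Suc:
  "sigma (Suc (Suc n)) p = (p (Cu 0) + p (Cv 0)) * sigma (Suc n) p - p (Cu 0) * p (Cv 0) * sigma n p"
  using sigma_Suc[of "Suc n" p] sigma_Suc[of n p] by (simp add: algebra_simps)

lemma sigma_convolution_rec:
  fixes f :: "nat \<Rightarrow> real"
  shows "(\<Sum>i=1..n+2. f i * sigma (n + 2 - i) p)
       = (p (Cu 0) + p (Cv 0)) * (\<Sum>i=1..n+1. f i * sigma (n + 1 - i) p)
         - p (Cu 0) * p (Cv 0) * (\<Sum>i=1..n. f i * sigma (n - i) p) + f (n + 2)"
proof -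
  have "(\<Sum>i=1..n. f i * sigma (n + 2 - i) p)
      = (\<Sum>i=1..n. (p (Cu 0) + p (Cv 0)) * (f i * sigma (n + 1 - i) p)
                   - p (Cu 0) * p (Cv 0) * (f i * sigma (n - i) p))"
  proof (rule sum.cong)
    fix i assume "i \<in> {1..n}"
    then have "n + 2 - i = Suc (Suc (n - i))" "n + 1 - i = Suc (n - i)" by auto
    then show "f i * sigma (n + 2 - i) p = (p (Cu 0) + p (Cv 0)) * (f i * sigma (n + 1 - i) p)
                   - p (Cu 0) * p (Cv 0) * (f i * sigma (n - i) p)"
      by (simp add: sigma_Suc_Suc algebra_simps)
  qed simp
  then show ?thesis
    using sigma_Suc[of 0 p]
    by (simp add: sum_subtractf sum_distrib_left algebra_simps)
qed

fun X_rec :: "nat \<Rightarrow> pt \<Rightarrow> real" where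
  "X_rec 0 p = 0"
| "X_rec (Suc 0) p = 0"
| "X_rec (Suc (Suc 0)) p = 1"
| "X_rec (Suc (Suc (Suc j))) p = (p (Cu 0) + p (Cv 0)) * X_rec (Suc (Suc j)) p
     - p (Cu 0) * p (Cv 0) * X_rec (Suc j) p - real j * psi j p"

fun Y_rec :: "nat \<Rightarrow> pt \<Rightarrow> real" where
  "Y_rec 0 p = 0"
| "Y_rec (Suc 0) p = 1"
| "Y_rec (Suc (Suc n)) p = - (p (Cu 0) * p (Cv 0) * X_rec (Suc n) p) - real n * psi n p"

lemma X_rec_closed_form:
  "X_rec (n + 3) p = sigma (n + 1) p - (\<Sum>i=1..n. real i * psi i p * sigma (n - i) p)"
proof (induction n rule: induct_nat_012)
  case (ge2 n)
  let ?C = "\<lambda>m. \<Sum>i=1..m. real i * psi i p * sigma (m - i) p"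
  have "X_rec (n + 5) p = (p (Cu 0) + p (Cv 0)) * X_rec (n + 4) p - p (Cu 0) * p (Cv 0) * X_rec (n + 3) p
      - real (n + 2) * psi (n + 2) p"
    by (simp add: eval_nat_numeral)
  moreover have "X_rec (n + 3) p = sigma (n + 1) p - ?C n" "X_rec (n + 4) p = sigma (n + 2) p - ?C (n + 1)"
    using ge2 by (simp_all add: add.commute)
  moreover have "sigma (n + 3) p = (p (Cu 0) + p (Cv 0)) * sigma (n + 2) p - p (Cu 0) * p (Cv 0) * sigma (n + 1) p"
    using sigma_Suc_Suc[of "Suc n" p] by (simp add: eval_nat_numeral)
  ultimately have "X_rec (n + 5) p = sigma (n + 3) p - ?C (n + 2)"
    using sigma_convolution_rec[of "\<lambda>i. real i * psi i p" n p] by (simp add: algebra_simps)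
  then show ?case
    by (simp del: X_rec.simps add: eval_nat_numeral)
qed (simp_all add: eval_nat_numeral sigma_Suc algebra_simps)

lemma Xk_eq_X_rec:
  assumes "2 \<le> k"
  shows "Xk k = X_rec k"
proof -
  obtain n where k: "k = 2 + n"
    using le_Suc_ex[OF assms] by blast
  show ?thesis
  proof (cases n)
    case 0
    then show ?thesis by (auto simp: k Xk_def numeral_2_eq_2)
  next
    case (Suc m)
    then have "k = m + 3" by (simp add: k)
    then show ?thesis by (auto simp: Xk_def X_rec_closed_form mult.commute mult.left_commute)
  qed
qed

fun dX_rec :: "coord \<Rightarrow> nat \<Rightarrow> pt \<Rightarrow> real" where
  "dX_rec c 0 p = 0"
| "dX_rec c (Suc 0) p = 0"
| "dX_rec c (Suc (Suc 0)) p = 0"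
| "dX_rec c (Suc (Suc (Suc j))) p =
     (of_bool (c = Cu 0) + of_bool (c = Cv 0)) * X_rec (Suc (Suc j)) p
     + (p (Cu 0) + p (Cv 0)) * dX_rec c (Suc (Suc j)) p
     - (of_bool (c = Cu 0) * p (Cv 0) + p (Cu 0) * of_bool (c = Cv 0)) * X_rec (Suc j) p
     - p (Cu 0) * p (Cv 0) * dX_rec c (Suc j) p - real j * of_bool (c = psi_coord j)"

lemma coord_has_derivative: "((\<lambda>t. (p(c := t)) d) has_real_derivative of_bool (c = d)) (at x)"
  by (cases "c = d") auto

lemma X_rec_has_derivative: "((\<lambda>t. X_rec j (p(c := t))) has_real_derivative dX_rec c j p) (at (p c))"
proof (induction j p rule: X_rec.induct)
  case (4 j p)
  show ?case
    unfolding X_rec.simps dX_rec.simps psi_eq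
    by (rule derivative_eq_intros coord_has_derivative 4 refl | simp add: algebra_simps)+
qed auto

lemma pd_X_rec: "pd c (X_rec j) p = dX_rec c j p"
  unfolding pd_def by (rule DERIV_imp_deriv[OF X_rec_has_derivative])

lemma pd_Y_rec:
  "pd c (Y_rec (Suc (Suc n))) p =
     - ((of_bool (c = Cu 0) * p (Cv 0) + p (Cu 0) * of_bool (c = Cv 0)) * X_rec (Suc n) p
        + p (Cu 0) * p (Cv 0) * dX_rec c (Suc n) p) - real n * of_bool (c = psi_coord n)"
proof -
  have "((\<lambda>t. Y_rec (Suc (Suc n)) (p(c := t))) has_real_derivative
     - ((of_bool (c = Cu 0) * p (Cv 0) + p (Cu 0) * of_bool (c = Cv 0)) * X_rec (Suc n) p
        + p (Cu 0) * p (Cv 0) * dX_rec c (Suc n) p) - real n * of_bool (c = psi_coord n)) (at (p c))"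
    unfolding Y_rec.simps psi_eq
    by (rule derivative_eq_intros coord_has_derivative X_rec_has_derivative refl
        | simp add: algebra_simps)+
  then show ?thesis
    unfolding pd_def by (rule DERIV_imp_deriv)
qed

lemma dX_rec_eq_0: "c \<noteq> Cu 0 \<Longrightarrow> c \<noteq> Cv 0 \<Longrightarrow> c \<notin> range psi_coord \<Longrightarrow> dX_rec c j p = 0"
  by (induction c j p rule: dX_rec.induct) auto

lemma dX_rec_jet [simp]: "dX_rec (Cu (Suc i)) j p = 0" "dX_rec (Cv (Suc i)) j p = 0"
  by (auto intro: dX_rec_eq_0)

definition field_deriv ::
    "(pt \<Rightarrow> real) \<Rightarrow> (pt \<Rightarrow> real) \<Rightarrow> (nat \<Rightarrow> pt \<Rightarrow> real) \<Rightarrow> nat \<Rightarrow>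
      (pt \<Rightarrow> real) \<Rightarrow> pt \<Rightarrow> real" where
  "field_deriv a b w N F p =
     a p * pd (Cu 0) F p + b p * pd (Cv 0) F p + (\<Sum>i=1..N. w i p * pd (psi_coord i) F p)"

lemma sum_delta_scaled:
  fixes f :: "nat \<Rightarrow> real"
  shows "J \<le> N \<Longrightarrow> (\<Sum>i=1..N. if i = J then real J * f i else 0) = real J * f J"
  by (cases "J = 0") (simp_all add: sum.delta)

lemma field_deriv_X_rec_Suc3:
  assumes "J \<le> N"
  shows "field_deriv a b w N (X_rec (J + 3)) p =
     (a p + b p) * X_rec (J + 2) p + (p (Cu 0) + p (Cv 0)) * field_deriv a b w N (X_rec (J + 2)) p
     - (a p * p (Cv 0) + p (Cu 0) * b p) * X_rec (J + 1) p
     - p (Cu 0) * p (Cv 0) * field_deriv a b w N (X_rec (J + 1)) p - real J * w J p"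
proof -
  have "(\<Sum>i=1..N. w i p * dX_rec (psi_coord i) (J + 3) p)
     = (\<Sum>i=1..N. (p (Cu 0) + p (Cv 0)) * (w i p * dX_rec (psi_coord i) (J + 2) p)
         - p (Cu 0) * p (Cv 0) * (w i p * dX_rec (psi_coord i) (J + 1) p)
         - (if i = J then real J * w i p else 0))"
    by (intro sum.cong) (auto simp: eval_nat_numeral algebra_simps)
  also have "\<dots> = (p (Cu 0) + p (Cv 0)) * (\<Sum>i=1..N. w i p * dX_rec (psi_coord i) (J + 2) p)
       - p (Cu 0) * p (Cv 0) * (\<Sum>i=1..N. w i p * dX_rec (psi_coord i) (J + 1) p)
       - real J * w J p"
    using sum_delta_scaled[OF assms, of "\<lambda>i. w i p"] by (simp add: sum_subtractf sum_distrib_left)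
  finally show ?thesis
    by (simp add: field_deriv_def pd_X_rec eval_nat_numeral algebra_simps)
qed

lemma field_deriv_Y_rec_Suc2:
  assumes "n \<le> N"
  shows "field_deriv a b w N (Y_rec (n + 2)) p =
     - (a p * p (Cv 0) + p (Cu 0) * b p) * X_rec (n + 1) p
     - p (Cu 0) * p (Cv 0) * field_deriv a b w N (X_rec (n + 1)) p - real n * w n p"
proof -
  have "(\<Sum>i=1..N. w i p * pd (psi_coord i) (Y_rec (n + 2)) p)
     = (\<Sum>i=1..N. - p (Cu 0) * p (Cv 0) * (w i p * dX_rec (psi_coord i) (n + 1) p)
         - (if i = n then real n * w i p else 0))"
    by (intro sum.cong) (auto simp: pd_Y_rec algebra_simps)
  also have "\<dots> = - p (Cu 0) * p (Cv 0) * (\<Sum>i=1..N. w i p * dX_rec (psi_coord i) (n + 1) p)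
       - real n * w n p"
    using sum_delta_scaled[OF assms, of "\<lambda>i. w i p"] by (simp add: sum_subtractf sum_distrib_left)
  finally show ?thesis
    by (simp add: field_deriv_def pd_X_rec pd_Y_rec algebra_simps)
qed

text \<open>In the application (a, b) and (c, d) are the d_u, d_v components of D_x and D_y, and
  the two assumptions say D_y (u+v) = - D_x (uv) and D_y (uv) = uv D_x (u+v) - (u+v) D_x (uv) + 1.\<close>

context
  fixes a b c d :: "pt \<Rightarrow> real" and N :: nat and p :: pt
  assumes sum: "c p + d p = - (a p * p (Cv 0) + p (Cu 0) * b p)"
    and weighted: "c p * p (Cv 0) + p (Cu 0) * d p = p (Cu 0) * p (Cv 0) * (a p + b p)
                     - (p (Cu 0) + p (Cv 0)) * (a p * p (Cv 0) + p (Cu 0) * b p) + 1"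
begin

lemma field_deriv_X_rec_step:
  assumes N: "n + 4 \<le> N"
    and IH: "field_deriv c d Y_rec N (X_rec (n + 3)) p =
               - (a p * p (Cv 0) + p (Cu 0) * b p) * X_rec (n + 2) p
               - p (Cu 0) * p (Cv 0) * field_deriv a b X_rec N (X_rec (n + 2)) p
               - real (n + 1) * X_rec (n + 1) p"
      "field_deriv c d Y_rec N (X_rec (n + 4)) p =
               - (a p * p (Cv 0) + p (Cu 0) * b p) * X_rec (n + 3) p
               - p (Cu 0) * p (Cv 0) * field_deriv a b X_rec N (X_rec (n + 3)) p
               - real (n + 2) * X_rec (n + 2) p"
  shows "field_deriv c d Y_rec N (X_rec (n + 5)) p =
           - (a p * p (Cv 0) + p (Cu 0) * b p) * X_rec (n + 4) p
           - p (Cu 0) * p (Cv 0) * field_deriv a b X_rec N (X_rec (n + 4)) p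
           - real (n + 3) * X_rec (n + 3) p"
proof -
  let ?s = "p (Cu 0) + p (Cv 0)" and ?q = "p (Cu 0) * p (Cv 0)"
  let ?B = "a p * p (Cv 0) + p (Cu 0) * b p"
  let ?LX = "\<lambda>j. field_deriv a b X_rec N (X_rec j) p"
  let ?LY = "\<lambda>j. field_deriv c d Y_rec N (X_rec j) p"
  have LY5: "?LY (n + 5) = (c p + d p) * X_rec (n + 4) p + ?s * ?LY (n + 4)
      - (c p * p (Cv 0) + p (Cu 0) * d p) * X_rec (n + 3) p - ?q * ?LY (n + 3)
      - real (n + 2) * Y_rec (n + 2) p"
    using field_deriv_X_rec_Suc3[of "n + 2" N c d Y_rec p] N
    by (simp del: X_rec.simps Y_rec.simps add: eval_nat_numeral)
  have LX4: "?LX (n + 4) = (a p + b p) * X_rec (n + 3) p + ?s * ?LX (n + 3)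
      - ?B * X_rec (n + 2) p - ?q * ?LX (n + 2) - real (n + 1) * X_rec (n + 1) p"
    using field_deriv_X_rec_Suc3[of "n + 1" N a b X_rec p] N
    by (simp del: X_rec.simps Y_rec.simps add: eval_nat_numeral)
  have X4: "X_rec (n + 4) p = ?s * X_rec (n + 3) p - ?q * X_rec (n + 2) p - real (n + 1) * psi (n + 1) p"
    and X3: "X_rec (n + 3) p = ?s * X_rec (n + 2) p - ?q * X_rec (n + 1) p - real n * psi n p"
    and Y2: "Y_rec (n + 2) p = - (?q * X_rec (n + 1) p) - real n * psi n p"
    by (simp_all add: eval_nat_numeral)
  show ?thesis
    unfolding LY5 IH LX4 X4 Y2 sum weighted X3 by (simp add: algebra_simps)
qed

lemma field_deriv_conservation:
  assumes m: "3 \<le> m" "m \<le> N + 1"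
  shows "field_deriv c d Y_rec N (X_rec m) p = field_deriv a b X_rec N (Y_rec m) p"
proof -
  let ?B = "a p * p (Cv 0) + p (Cu 0) * b p"
  let ?LX = "\<lambda>j. field_deriv a b X_rec N (X_rec j) p"
  let ?LY = "\<lambda>j. field_deriv c d Y_rec N (X_rec j) p"
  have low: "?LX 1 = 0" "?LX 2 = 0" "?LY 1 = 0" "?LY 2 = 0" "X_rec 1 p = 0" "X_rec 2 p = 1"
    by (simp_all add: field_deriv_def pd_X_rec numeral_2_eq_2)
  have expanded: "?LY (n + 3) = - ?B * X_rec (n + 2) p - p (Cu 0) * p (Cv 0) * ?LX (n + 2)
      - real (n + 1) * X_rec (n + 1) p" if "n + 2 \<le> N" for n
    using that
  proof (induction n rule: induct_nat_012)
    case 0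
    show ?case
      using field_deriv_X_rec_Suc3[of 0 N c d Y_rec p] low sum
      by (simp del: X_rec.simps add: eval_nat_numeral)
  next
    case 1
    have X3: "X_rec 3 p = p (Cu 0) + p (Cv 0)"
      by (simp add: eval_nat_numeral)
    have LY3: "?LY 3 = c p + d p" and LX3: "?LX 3 = a p + b p"
      using field_deriv_X_rec_Suc3[of 0 N c d Y_rec p] field_deriv_X_rec_Suc3[of 0 N a b X_rec p] low
      by (simp_all del: X_rec.simps add: eval_nat_numeral)
    have "?LY 4 = (c p + d p) * X_rec 3 p + (p (Cu 0) + p (Cv 0)) * ?LY 3
        - (c p * p (Cv 0) + p (Cu 0) * d p) * X_rec 2 p - p (Cu 0) * p (Cv 0) * ?LY 2 - Y_rec 1 p"
      using field_deriv_X_rec_Suc3[of 1 N c d Y_rec p] 1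
      by (simp del: X_rec.simps add: eval_nat_numeral)
    then have "?LY 4 = - ?B * X_rec 3 p - p (Cu 0) * p (Cv 0) * ?LX 3 - 2 * X_rec 2 p"
      unfolding LY3 LX3 X3 low sum weighted by (simp add: algebra_simps)
    then show ?case
      by (simp del: X_rec.simps add: eval_nat_numeral)
  next
    case (ge2 n)
    then show ?case
      using field_deriv_X_rec_step[of n] by (simp del: X_rec.simps add: eval_nat_numeral)
  qed
  obtain n where n: "m = n + 3"
    using m(1) by (metis add.commute le_Suc_ex)
  show ?thesis
    using expanded[of n] field_deriv_Y_rec_Suc2[of "n + 1" N a b X_rec p] m
    by (simp add: n eval_nat_numeral)
qed

end

lemma Yk_eq_Y_rec: "3 \<le> k \<Longrightarrow> Yk k = Y_rec k"
proof -
  assume "3 \<le> k"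
  then obtain n where "k = 3 + n"
    using le_Suc_ex by blast
  then show ?thesis
    by (intro ext) (simp add: Yk_def Xk_eq_X_rec eval_nat_numeral)
qed

lemma Bidx_Suc: "3 \<le> k \<Longrightarrow> Bidx k + 1 = k - 1"
  by (auto simp: Bidx_def)

lemma sum_split_first_two: "2 \<le> (M::nat) \<Longrightarrow> sum f {1..M} = f 1 + f 2 + sum f {3..M}"
  by (simp add: sum.atLeast_Suc_atMost numeral_3_eq_3 numeral_2_eq_2 add.assoc)

lemma DxE_eq_field_deriv:
  assumes k: "3 \<le> k" and jets: "\<And>i. pd (Cu (Suc i)) F p = 0" "\<And>i. pd (Cv (Suc i)) F p = 0"
  shows "DxE (Bidx k) F p = field_deriv (\<lambda>q. q (Cu 1)) (\<lambda>q. q (Cv 1)) X_rec (k - 1) F p"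
proof -
  have "(\<Sum>i. p (Cu (Suc i)) * pd (Cu i) F p + p (Cv (Suc i)) * pd (Cv i) F p)
      = p (Cu 1) * pd (Cu 0) F p + p (Cv 1) * pd (Cv 0) F p"
    by (subst suminf_finite[of "{0}"]) (auto simp: jets gr0_conv_Suc)
  moreover have "(\<Sum>i\<in>{3..Bidx k + 1}. Xk i p * pd (Cpsi i) F p)
      = (\<Sum>i\<in>{3..k - 1}. X_rec i p * pd (psi_coord i) F p)"
    unfolding Bidx_Suc[OF k] by (rule sum.cong) (auto simp: Xk_eq_X_rec)
  ultimately have "DxE (Bidx k) F p = pd Cx F p + (p (Cu 1) * pd (Cu 0) F p + p (Cv 1) * pd (Cv 0) F p)
      + (\<Sum>i\<in>{3..k - 1}. X_rec i p * pd (psi_coord i) F p)"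
    unfolding DxE_def Dx1_def by simp
  then show ?thesis
    unfolding field_deriv_def using k by (subst sum_split_first_two) (simp_all add: numeral_2_eq_2)
qed

lemma DyE_eq_field_deriv:
  assumes k: "3 \<le> k" and jets: "\<And>i. pd (Cu (Suc i)) F p = 0" "\<And>i. pd (Cv (Suc i)) F p = 0"
  shows "DyE (Bidx k) F p = field_deriv rhsU rhsV Y_rec (k - 1) F p"
proof -
  have "(\<Sum>i. (Dx1 ^^ i) rhsU p * pd (Cu i) F p + (Dx1 ^^ i) rhsV p * pd (Cv i) F p)
      = rhsU p * pd (Cu 0) F p + rhsV p * pd (Cv 0) F p"
    by (subst suminf_finite[of "{0}"]) (auto simp: jets gr0_conv_Suc)
  moreover have "(\<Sum>i\<in>{3..Bidx k + 1}. Yk i p * pd (Cpsi i) F p)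
      = (\<Sum>i\<in>{3..k - 1}. Y_rec i p * pd (psi_coord i) F p)"
    unfolding Bidx_Suc[OF k] by (rule sum.cong) (auto simp: Yk_eq_Y_rec)
  ultimately have "DyE (Bidx k) F p = pd Cy F p + (rhsU p * pd (Cu 0) F p + rhsV p * pd (Cv 0) F p)
      + (\<Sum>i\<in>{3..k - 1}. Y_rec i p * pd (psi_coord i) F p)"
    unfolding DyE_def Dy1_def by simp
  then show ?thesis
    unfolding field_deriv_def using k by (subst sum_split_first_two) (simp_all add: numeral_2_eq_2)
qed

lemma rhs_compatibility:
  assumes "p \<in> Dom"
  shows "rhsU p + rhsV p = - (p (Cu 1) * p (Cv 0) + p (Cu 0) * p (Cv 1))"
    and "rhsU p * p (Cv 0) + p (Cu 0) * rhsV p = p (Cu 0) * p (Cv 0) * (p (Cu 1) + p (Cv 1))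
           - (p (Cu 0) + p (Cv 0)) * (p (Cu 1) * p (Cv 0) + p (Cu 0) * p (Cv 1)) + 1"
proof -
  let ?u = "p (Cu 0)" and ?v = "p (Cv 0)"
  define w where "w = 1 / (?v - ?u)"
  have "1 / (?u - ?v) = - w"
    unfolding w_def by (metis minus_diff_eq divide_minus_right)
  then have U: "rhsU p = w - ?v * p (Cu 1)" and V: "rhsV p = - w - ?u * p (Cv 1)"
    by (simp_all add: rhsU_def rhsV_def w_def)
  have "?v - ?u \<noteq> 0"
    using assms by (auto simp: Dom_def)
  then have one: "(?v - ?u) * w = 1"
    by (simp add: w_def)
  show "rhsU p + rhsV p = - (p (Cu 1) * ?v + ?u * p (Cv 1))"
    by (simp add: U V)
  have "rhsU p * ?v + ?u * rhsV p = (?v - ?u) * w - ?v * ?v * p (Cu 1) - ?u * ?u * p (Cv 1)"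
    by (simp add: U V algebra_simps)
  also have "\<dots> = ?u * ?v * (p (Cu 1) + p (Cv 1)) - (?u + ?v) * (p (Cu 1) * ?v + ?u * p (Cv 1)) + 1"
    unfolding one by (simp add: algebra_simps)
  finally show "rhsU p * ?v + ?u * rhsV p = ?u * ?v * (p (Cu 1) + p (Cv 1))
           - (?u + ?v) * (p (Cu 1) * ?v + ?u * p (Cv 1)) + 1" .
qed

lemma conservation_law:
  assumes k: "3 \<le> k" and p: "p \<in> Dom"
  shows "DyE (Bidx k) (Xk k) p = DxE (Bidx k) (Yk k) p"
proof -
  obtain n where n: "k = 2 + n"
    using k le_Suc_ex[of 2 k] by auto
  have "DyE (Bidx k) (Xk k) p = field_deriv rhsU rhsV Y_rec (k - 1) (X_rec k) p"
    using k by (simp add: Xk_eq_X_rec DyE_eq_field_deriv pd_X_rec)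
  also have "\<dots> = field_deriv (\<lambda>q. q (Cu 1)) (\<lambda>q. q (Cv 1)) X_rec (k - 1) (Y_rec k) p"
    using rhs_compatibility[OF p] k by (intro field_deriv_conservation) auto
  also have "\<dots> = DxE (Bidx k) (Yk k) p"
    using k by (simp add: n Yk_eq_Y_rec DxE_eq_field_deriv pd_Y_rec)
  finally show ?thesis .
qed

section \<open>Nontriviality\<close>

lemma power_ne_poly_of_lower_degree:
  fixes P :: "'a::idom poly"
  assumes S: "infinite S" and deg: "degree P < n" and eq: "\<forall>t\<in>S. t ^ n = poly P t"
  shows False
proof -
  let ?Q = "monom 1 n - P"
  have "coeff ?Q n = 1"
    using deg by (simp add: coeff_eq_0)
  then have "finite {t. poly ?Q t = 0}"
    by (intro poly_roots_finite) auto
  moreover have "S \<subseteq> {t. poly ?Q t = 0}"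
    using eq by (auto simp: poly_monom)
  ultimately show False
    using S finite_subset by blast
qed

definition depends_only_on :: "coord set \<Rightarrow> (pt \<Rightarrow> real) \<Rightarrow> bool" where
  "depends_only_on S g \<longleftrightarrow> (\<forall>p q. (\<forall>c\<in>S. p c = q c) \<longrightarrow> g p = g q)"

definition partially_differentiable :: "(pt \<Rightarrow> real) \<Rightarrow> bool" where
  "partially_differentiable g \<longleftrightarrow> (\<forall>c. \<forall>q\<in>Dom. (\<lambda>t. g (q(c := t))) differentiable (at (q c)))"

lemma smoothE_finite_dependence: "smoothE m g \<Longrightarrow> \<exists>S. finite S \<and> depends_only_on S g"
  unfolding smoothE_def depends_only_on_def by blast

lemma smoothE_partially_differentiable: "smoothE m g \<Longrightarrow> partially_differentiable g"
  unfolding smoothE_def partially_differentiable_def by (metis iter_pd.simps(1))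

lemma depends_only_on_upd: "depends_only_on S g \<Longrightarrow> c \<notin> S \<Longrightarrow> g (p(c := a)) = g p"
  unfolding depends_only_on_def by (metis fun_upd_other)

lemma pd_eq_0_if_const: "(\<And>t. g (p(c := t)) = g p) \<Longrightarrow> pd c g p = 0"
  unfolding pd_def by simp

lemma pd_eq_0_outside: "depends_only_on S g \<Longrightarrow> c \<notin> S \<Longrightarrow> pd c g p = 0"
  by (intro pd_eq_0_if_const depends_only_on_upd)

lemma summable_jet_terms:
  assumes "finite S" and "depends_only_on S g"
  shows "summable (\<lambda>i. p (Cu (Suc i)) * pd (Cu i) g p + p (Cv (Suc i)) * pd (Cv i) g p)"
proof (rule summable_finite)
  show "finite (Cu -` S \<union> Cv -` S)"
    using assms(1) by (auto intro: finite_vimageI inj_onI)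
qed (simp add: pd_eq_0_outside[OF assms(2)])

lemma Dom_upd: "p \<in> Dom \<Longrightarrow> c \<noteq> Cu 0 \<Longrightarrow> c \<noteq> Cv 0 \<Longrightarrow> p(c := t) \<in> Dom"
  by (simp add: Dom_def)

lemma eventually_upd_in_Dom:
  assumes "p \<in> Dom"
  shows "eventually (\<lambda>t. p(c := t) \<in> Dom) (nhds (p c))"
proof -
  have cont: "continuous_on UNIV (\<lambda>t. (p(c := t)) d)" for d
    by (cases "d = c") (simp_all add: continuous_on_id)
  have "open {t. (p(c := t)) (Cu 0) \<noteq> (p(c := t)) (Cv 0)}"
    by (intro open_Collect_neq cont)
  then have "eventually (\<lambda>t. t \<in> {t. (p(c := t)) (Cu 0) \<noteq> (p(c := t)) (Cv 0)}) (nhds (p c))"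
    using assms by (intro eventually_nhds_in_open) (auto simp: Dom_def)
  then show ?thesis
    by (simp add: Dom_def)
qed

lemma pd_upd_eq:
  assumes c': "c' \<noteq> Cu 0" "c' \<noteq> Cv 0" and inv: "\<forall>q\<in>Dom. \<forall>a. g (q(c' := a)) = g q"
    and p: "p \<in> Dom"
  shows "pd c g (p(c' := a)) = pd c g p"
proof (cases "c = c'")
  case True
  have "g (p(c' := t)) = g p" for t
    using inv p by blast
  then show ?thesis
    using True by (simp add: pd_eq_0_if_const)
next
  case False
  have "eventually (\<lambda>t. g ((p(c' := a))(c := t)) = g (p(c := t))) (nhds (p c))"
    using eventually_upd_in_Dom[OF p, of c]
  proof (rule eventually_mono)
    fix t assume "p(c := t) \<in> Dom"
    then show "g ((p(c' := a))(c := t)) = g (p(c := t))"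
      using inv False by (simp add: fun_upd_twist)
  qed
  then show ?thesis
    unfolding pd_def using False by (intro deriv_cong_ev) simp_all
qed

lemma const_along_convex_line:
  assumes diff: "partially_differentiable g" and zero: "\<forall>q\<in>Dom. pd c g q = 0"
    and T: "convex T" "\<forall>t\<in>T. p(c := t) \<in> Dom" and st: "s \<in> T" "t \<in> T"
  shows "g (p(c := s)) = g (p(c := t))"
proof -
  have "((\<lambda>t. g (p(c := t))) has_real_derivative 0) (at x within T)" if x: "x \<in> T" for x
  proof -
    let ?q = "p(c := x)"
    have "?q \<in> Dom"
      using T x by blast
    then have "(\<lambda>t. g (?q(c := t))) differentiable (at (?q c))" and "pd c g ?q = 0"
      using diff zero unfolding partially_differentiable_def by blast+
    then have "((\<lambda>t. g (p(c := t))) has_real_derivative 0) (at x)"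
      by (simp add: pd_def DERIV_deriv_iff_real_differentiable[symmetric])
    then show ?thesis
      by (rule has_field_derivative_at_within)
  qed
  then obtain C where "\<forall>x\<in>T. g (p(c := x)) = C"
    using has_field_derivative_zero_constant[OF T(1)] by blast
  then show ?thesis
    using st by simp
qed

lemma Xk_upd_jet: "Xk k (p(Cu (Suc j) := a)) = Xk k p"
  by (simp add: Xk_def sigma_def psi_eq)

lemma potential_pd_Cu_eq_0:
  assumes X: "\<forall>q\<in>Dom. Xk k q = DxE m g q" and S: "finite S" "depends_only_on S g"
    and indep: "\<forall>q\<in>Dom. \<forall>a. g (q(Cu (Suc j) := a)) = g q" and p: "p \<in> Dom"
  shows "pd (Cu j) g p = 0"
proof -
  define p' where "p' = p(Cu (Suc j) := p (Cu (Suc j)) + 1)"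
  have p': "p' \<in> Dom"
    using p by (simp add: p'_def Dom_upd)
  have pd_p': "pd c g p' = pd c g p" for c
    unfolding p'_def using indep p by (intro pd_upd_eq) auto
  let ?f = "\<lambda>q i. q (Cu (Suc i)) * pd (Cu i) g p + q (Cv (Suc i)) * pd (Cv i) g p"
  have "?f p sums suminf (?f p)"
    using summable_jet_terms[OF S] by (rule summable_sums)
  from sums_add[OF this sums_single[of j "\<lambda>i. pd (Cu i) g p"]]
  have "(\<lambda>i. ?f p i + (if i = j then pd (Cu i) g p else 0)) sums (suminf (?f p) + pd (Cu j) g p)" .
  moreover have "?f p' = (\<lambda>i. ?f p i + (if i = j then pd (Cu i) g p else 0))"
    by (auto simp: p'_def algebra_simps)
  ultimately have "?f p' sums (suminf (?f p) + pd (Cu j) g p)"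
    by simp
  then have "Dx1 g p' = Dx1 g p + pd (Cu j) g p"
    by (simp add: Dx1_def pd_p' sums_iff)
  moreover have Xk_p': "Xk i p' = Xk i p" for i
    by (simp add: p'_def Xk_upd_jet)
  ultimately have "DxE m g p' = DxE m g p + pd (Cu j) g p"
    by (simp add: DxE_def pd_p')
  then show ?thesis
    using X p p' Xk_p'[of k] by simp
qed

lemma potential_pd_Cu0_eq_0:
  assumes X: "\<forall>q\<in>Dom. Xk k q = DxE m g q" and S: "finite S" "depends_only_on S g"
    and diff: "partially_differentiable g" and p: "p \<in> Dom"
  shows "pd (Cu 0) g p = 0"
proof -
  have "finite (Cu -` S)"
    using S(1) by (rule finite_vimageI) (simp add: inj_def)
  then obtain n where n: "Cu -` S \<subseteq> {..<n}"
    using finite_nat_bounded by blast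
  have "\<forall>q\<in>Dom. \<forall>a. g (q(Cu (Suc j) := a)) = g q" if "j \<le> n" for j
    using that
  proof (induction j rule: inc_induct)
    case base
    have "Cu (Suc n) \<notin> S"
      using n by auto
    then show ?case
      using depends_only_on_upd[OF S(2)] by blast
  next
    case (step i)
    have zero: "\<forall>q\<in>Dom. pd (Cu (Suc i)) g q = 0"
      using potential_pd_Cu_eq_0[OF X S step.IH] by blast
    show ?case
    proof (intro ballI allI)
      fix q a assume q: "q \<in> Dom"
      show "g (q(Cu (Suc i) := a)) = g q"
        using const_along_convex_line[OF diff zero convex_UNIV, of q a "q (Cu (Suc i))"] q
        by (simp add: Dom_upd)
    qed
  qed
  then show ?thesis
    using potential_pd_Cu_eq_0[OF X S _ p] by blast
qed

definition u_axis :: "real \<Rightarrow> pt" where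
  "u_axis t = (\<lambda>_. 0)(Cu 0 := t)"

lemma u_axis_in_Dom: "t \<noteq> 0 \<Longrightarrow> u_axis t \<in> Dom"
  by (simp add: u_axis_def Dom_def)

lemma Xk_u_axis: "Xk i (u_axis t) = t ^ (i - 2)"
proof -
  have "sigma n (u_axis t) = t ^ n" for n
    by (induction n) (simp_all add: sigma_Suc u_axis_def)
  then show ?thesis
    by (simp add: Xk_def psi_eq u_axis_def)
qed

lemma DxE_u_axis:
  assumes "3 \<le> k"
  shows "DxE (Bidx k) g (u_axis t) =
     pd Cx g (u_axis t) + (\<Sum>i\<in>{3..k - 1}. t ^ (i - 2) * pd (Cpsi i) g (u_axis t))"
  unfolding DxE_def Dx1_def Bidx_Suc[OF assms] by (simp add: Xk_u_axis) (simp add: u_axis_def)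

lemma pd_u_axis_eq:
  assumes diff: "partially_differentiable g" and u0: "\<forall>q\<in>Dom. pd (Cu 0) g q = 0"
    and t: "t < 0" and c: "c \<noteq> Cu 0" "c \<noteq> Cv 0"
  shows "pd c g (u_axis t) = pd c g (u_axis (-1))"
proof -
  have "g ((u_axis t)(c := s)) = g ((u_axis (-1))(c := s))" for s
  proof -
    let ?q = "(u_axis (-1))(c := s)"
    have "\<forall>x\<in>{..<0}. ?q(Cu 0 := x) \<in> Dom"
      using c by (simp add: u_axis_def Dom_def)
    then have "g (?q(Cu 0 := t)) = g (?q(Cu 0 := -1))"
      using t by (intro const_along_convex_line[OF diff u0, of "{..<0}"]) simp_all
    moreover have "?q(Cu 0 := t) = (u_axis t)(c := s)" "?q(Cu 0 := -1) = ?q"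
      using c by (auto simp: u_axis_def fun_upd_twist)
    ultimately show ?thesis
      by simp
  qed
  then show ?thesis
    using c by (simp add: pd_def u_axis_def)
qed

lemma no_potential:
  assumes k: "3 \<le> k" and g: "smoothE (Bidx k) g" and X: "\<forall>p\<in>Dom. Xk k p = DxE (Bidx k) g p"
  shows False
proof -
  obtain S where S: "finite S" "depends_only_on S g"
    using smoothE_finite_dependence[OF g] by blast
  have diff: "partially_differentiable g"
    using smoothE_partially_differentiable[OF g] .
  have u0: "\<forall>q\<in>Dom. pd (Cu 0) g q = 0"
    using potential_pd_Cu0_eq_0[OF X S diff] by blast
  define P where "P = [:pd Cx g (u_axis (-1)):]
    + (\<Sum>i\<in>{3..k - 1}. monom (pd (Cpsi i) g (u_axis (-1))) (i - 2))"
  have "\<forall>t\<in>{..<0}. t ^ (k - 2) = poly P t"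
  proof
    fix t :: real assume "t \<in> {..<0}"
    then have t: "t < 0"
      by simp
    then have "Xk k (u_axis t) = DxE (Bidx k) g (u_axis t)"
      using X u_axis_in_Dom[of t] by simp
    then have "t ^ (k - 2) = DxE (Bidx k) g (u_axis t)"
      by (simp add: Xk_u_axis)
    also have "\<dots> = poly P t"
      using pd_u_axis_eq[OF diff u0 t] k by (simp add: DxE_u_axis P_def poly_sum poly_monom mult.commute)
    finally show "t ^ (k - 2) = poly P t" .
  qed
  moreover have "degree P \<le> k - 3"
    unfolding P_def by (intro degree_add_le degree_sum_le) (auto intro: order.trans[OF degree_monom_le])
  ultimately show False
    using power_ne_poly_of_lower_degree[OF infinite_Iio, of _ "k - 2"] k by force
qed

theorem mainTheorem7:
  fixes k :: nat
  assumes "k \<ge> 3"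
  shows "(\<forall>p\<in>Dom. DyE (Bidx k) (Xk k) p = DxE (Bidx k) (Yk k) p) \<and>
         \<not> (\<exists>g. smoothE (Bidx k) g \<and>
               (\<forall>p\<in>Dom. Xk k p = DxE (Bidx k) g p \<and> Yk k p = DyE (Bidx k) g p))"
  using conservation_law[OF assms] no_potential[OF assms] by blast

end
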